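(* Let $\mu\in[0,2]$. Then for every bivariate copula $C$, \[ \mu\,\psi(C)+\xi(C)\ \ge\ \mu\,\psi(C^{\searrow}_\mu)+\xi(C^{\searrow}_\mu). \]
   Context: For a bivariate copula $C$: $\xi(C)=6\int_0^1\int_0^1(\partial_1C(u,v))^2\,du\,dv-2$ and $\psi(C)=6\int_0^1C(u,u)\,du-2$. For $\mu\in[0,2]$ let $v_0=\frac{\mu}{2+\mu}$, $v_1=\frac{2}{2+\mu}$ and $h_\mu(t,v)=h_1(v)\mathbf{1}_{\{t\le v\}}+h_2(v)\mathbf{1}_{\{t>v\}}$, where $(h_1,h_2)(v)=(0,\frac{v}{1-v})$ on $[0,v_0]$, $(v-\frac{\mu}{2}(1-v),\,v+\frac{\mu}{2}v)$ on $(v_0,v_1]$, and $(2-\frac1v,1)$ on $(v_1,1]$; $C^{\searrow}_\mu(u,v)=\int_0^uh_\mu(t,v)\,dt$ (not necessarily a copula), with $\xi(C^{\searrow}_\mu):=6\int\int h_\mu^2-2$ and $\psi(C^{\searrow}_\mu):=6\int_0^1\int_0^1\mathbf{1}_{\{t\le v\}}h_\mu(t,v)\,dt\,dv-2$. Explicitly, with $v_1=\frac2{2+\mu}$: $\psi(C^{\searrow}_\mu)=-2v_1^2+6v_1-5+\frac1{v_1}$ and $\xi(C^{\searrow}_\mu)=-4v_1^2+20v_1-17+\frac2{v_1}-\frac1{v_1^2}-12\ln v_1$. *)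

theory Defs
  imports "HOL-Analysis.Analysis"
begin

definition is_copula :: "(real \<Rightarrow> real \<Rightarrow> real) \<Rightarrow> bool" where
  "is_copula C \<longleftrightarrow>
     (\<forall>u\<in>{0..1}. C u 0 = 0 \<and> C 0 u = 0 \<and> C u 1 = u \<and> C 1 u = u) \<and>
     (\<forall>u1 u2 v1 v2. 0 \<le> u1 \<and> u1 \<le> u2 \<and> u2 \<le> 1 \<and> 0 \<le> v1 \<and> v1 \<le> v2 \<and> v2 \<le> 1 \<longrightarrow>
        C u2 v2 - C u2 v1 - C u1 v2 + C u1 v1 \<ge> 0)"

text \<open>Chatterjee's xi: 6 * int_0^1 int_0^1 (d_1 C(u,v))^2 du dv - 2
  (partial derivative in the first argument; it exists a.e., and the
  Henstock-Kurzweil integral ignores the null set where it does not).\<close>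
definition xi_cop :: "(real \<Rightarrow> real \<Rightarrow> real) \<Rightarrow> real" where
  "xi_cop C = 6 * integral {0..1} (\<lambda>v. integral {0..1} (\<lambda>u. (deriv (\<lambda>t. C t v) u)^2)) - 2"

definition psi_cop :: "(real \<Rightarrow> real \<Rightarrow> real) \<Rightarrow> real" where
  "psi_cop C = 6 * integral {0..1} (\<lambda>u. C u u) - 2"

definition v0_mu :: "real \<Rightarrow> real" where "v0_mu \<mu> = \<mu> / (2 + \<mu>)"
definition v1_mu :: "real \<Rightarrow> real" where "v1_mu \<mu> = 2 / (2 + \<mu>)"

definition h1_mu :: "real \<Rightarrow> real \<Rightarrow> real" where
  "h1_mu \<mu> v = (if v \<le> v0_mu \<mu> then 0
                 else if v \<le> v1_mu \<mu> then v - \<mu>/2 * (1 - v)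
                 else 2 - 1/v)"

definition h2_mu :: "real \<Rightarrow> real \<Rightarrow> real" where
  "h2_mu \<mu> v = (if v \<le> v0_mu \<mu> then v / (1 - v)
                 else if v \<le> v1_mu \<mu> then v + \<mu>/2 * v
                 else 1)"

definition h_mu :: "real \<Rightarrow> real \<Rightarrow> real \<Rightarrow> real" where
  "h_mu \<mu> t v = (if t \<le> v then h1_mu \<mu> v else h2_mu \<mu> v)"

definition xi_searrow :: "real \<Rightarrow> real" where
  "xi_searrow \<mu> = 6 * integral {0..1} (\<lambda>v. integral {0..1} (\<lambda>t. (h_mu \<mu> t v)^2)) - 2"

definition psi_searrow :: "real \<Rightarrow> real" where
  "psi_searrow \<mu> = 6 * integral {0..1} (\<lambda>v. integral {0..1}
       (\<lambda>t. (if t \<le> v then 1 else 0) * h_mu \<mu> t v)) - 2"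

end

theory Submission
  imports Defs
begin

text \<open>
  Fix \<open>v \<in> (0, 1)\<close>. The section \<open>u \<mapsto> C(u, v)\<close> of a copula is nondecreasing and 1-Lipschitz, hence
  differentiable almost everywhere with \<open>\<integral>\<^sub>a\<^sup>b \<partial>\<^sub>1C(u, v) du = C(b, v) - C(a, v)\<close>. Cauchy-Schwarz on
  \<open>[0, v]\<close> and \<open>[v, 1]\<close> then gives \<open>\<integral>\<^sub>0\<^sup>1 (\<partial>\<^sub>1C)\<^sup>2 du \<ge> a\<^sup>2/v + (v - a)\<^sup>2/(1 - v)\<close> with \<open>a = C(v, v)\<close>,
  and the Frechet bounds confine \<open>a\<close> to \<open>[max 0 (2v - 1), v]\<close>. The minimum of
  \<open>\<mu> a + a\<^sup>2/v + (v - a)\<^sup>2/(1 - v)\<close> over that interval is \<open>\<mu> v h\<^sub>1(v) + v h\<^sub>1(v)\<^sup>2 + (1 - v) h\<^sub>2(v)\<^sup>2\<close>,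
  the \<open>v\<close>-integrand of \<open>\<mu> \<psi>(C\<^sup>\<searrow>\<^sub>\<mu>) + \<xi>(C\<^sup>\<searrow>\<^sub>\<mu>)\<close>; integrating over \<open>v\<close> proves the theorem.
\<close>

section \<open>Lebesgue's differentiation theorem for monotone 1-Lipschitz functions\<close>

definition finely_covered :: "(real \<Rightarrow> real \<Rightarrow> bool) \<Rightarrow> real set" where
  "finely_covered P = {x. \<forall>d>0. \<exists>a b. a < x \<and> x < b \<and> b - a < d \<and> P a b}"

lemma finely_covered_mono:
  assumes "\<And>a b. a < b \<Longrightarrow> P a b \<Longrightarrow> Q a b"
  shows "finely_covered P \<subseteq> finely_covered Q"
proof
  fix x assume "x \<in> finely_covered P"
  have "\<exists>a b. a < x \<and> x < b \<and> b - a < d \<and> Q a b" if "d > 0" for d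
  proof -
    obtain a b where "a < x" "x < b" "b - a < d" "P a b"
      using \<open>x \<in> finely_covered P\<close> \<open>d > 0\<close> unfolding finely_covered_def by blast
    with assms[of a b] show ?thesis by (meson less_trans)
  qed
  then show "x \<in> finely_covered Q" unfolding finely_covered_def by blast
qed

lemma not_finely_covered_iff:
  "x \<notin> finely_covered P \<longleftrightarrow> (\<exists>d>0. \<forall>a b. a < x \<longrightarrow> x < b \<longrightarrow> b - a < d \<longrightarrow> \<not> P a b)"
  unfolding finely_covered_def by blast

lemma finely_covered_borel: "finely_covered P \<in> sets borel"
proof -
  let ?U = "\<lambda>n::nat. \<Union>{{a<..<b} | a b. b - a < 1 / Suc n \<and> P a b}"
  have "finely_covered P = (\<Inter>n. ?U n)"
  proof (intro set_eqI iffI)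
    fix x assume x: "x \<in> finely_covered P"
    show "x \<in> (\<Inter>n. ?U n)"
    proof
      fix n :: nat
      have "(1::real) / Suc n > 0" by simp
      with x obtain a b where "a < x" "x < b" "b - a < 1 / Suc n" "P a b"
        unfolding finely_covered_def by blast
      then show "x \<in> ?U n" by (intro UnionI[of "{a<..<b}"]) auto
    qed
  next
    fix x assume x: "x \<in> (\<Inter>n. ?U n)"
    have "\<exists>a b. a < x \<and> x < b \<and> b - a < d \<and> P a b" if "d > 0" for d
    proof -
      obtain n :: nat where n: "1 / Suc n < d"
        using \<open>d > 0\<close> by (metis nat_approx_posE)
      from x have "x \<in> ?U n" by blast
      then obtain a b where "x \<in> {a<..<b}" "b - a < 1 / Suc n" "P a b"
        by blast
      with n show ?thesis by (intro exI[of _ a] exI[of _ b]) auto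
    qed
    then show "x \<in> finely_covered P" unfolding finely_covered_def by blast
  qed
  moreover have "open (?U n)" for n by (rule open_Union) auto
  ultimately show ?thesis by (auto intro: sets.countable_INT' borel_open)
qed

lemma Vitali_covering_finely_covered:
  fixes E V :: "real set"
  assumes "open V" "E \<subseteq> V" "E \<subseteq> finely_covered P"
  obtains \<C> where "countable \<C>"
    "\<And>i. i \<in> \<C> \<Longrightarrow> fst i < snd i \<and> {fst i..snd i} \<subseteq> V \<and> P (fst i) (snd i)"
    "disjoint_family_on (\<lambda>i. {fst i..snd i}) \<C>"
    "negligible (E - (\<Union>i\<in>\<C>. {fst i..snd i}))"
proof -
  define K where "K = {(c, \<rho>). 0 < \<rho> \<and> cball c \<rho> \<subseteq> V \<and> P (c - \<rho>) (c + \<rho>)}"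
  have K_pos: "\<And>i. i \<in> K \<Longrightarrow> 0 < snd i" unfolding K_def by auto
  have K_fine: "\<exists>i. i \<in> K \<and> x \<in> cball (fst i) (snd i) \<and> snd i < d" if "x \<in> E" "0 < d" for x d
  proof -
    obtain \<delta> where \<delta>: "\<delta> > 0" "ball x \<delta> \<subseteq> V"
      using assms(1,2) \<open>x \<in> E\<close> open_contains_ball by blast
    have "min d \<delta> > 0" using \<open>0 < d\<close> \<delta>(1) by simp
    then obtain a b where ab: "a < x" "x < b" "b - a < min d \<delta>" "P a b"
      using assms(3) \<open>x \<in> E\<close> unfolding finely_covered_def by blast
    have "{a..b} \<subseteq> ball x \<delta>" using ab by (auto simp: dist_real_def)
    moreover have "(a + b) / 2 - (b - a) / 2 = a" "(a + b) / 2 + (b - a) / 2 = b" by (simp_all add: field_simps)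
    ultimately show ?thesis using ab \<delta>
      by (intro exI[of _ "((a + b) / 2, (b - a) / 2)"]) (auto simp: K_def cball_eq_atLeastAtMost)
  qed
  obtain \<C> where \<C>: "countable \<C>" "\<C> \<subseteq> K"
    "pairwise (\<lambda>i j. disjnt (cball (fst i) (snd i)) (cball (fst j) (snd j))) \<C>"
    "negligible (E - (\<Union>i\<in>\<C>. cball (fst i) (snd i)))"
    by (rule Vitali_covering_theorem_cballs[of K snd E fst, OF K_pos K_fine]) blast
  define ends where "ends i = (fst i - snd i, fst i + snd i)" for i :: "real \<times> real"
  have cball_ends: "{fst (ends i)..snd (ends i)} = cball (fst i) (snd i)" for i
    unfolding ends_def cball_eq_atLeastAtMost by simp
  show ?thesis
  proof (rule that[of "ends ` \<C>"])
    show "disjoint_family_on (\<lambda>i. {fst i..snd i}) (ends ` \<C>)"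
      unfolding disjoint_family_on_def
    proof (intro ballI impI)
      fix i j assume "i \<in> ends ` \<C>" "j \<in> ends ` \<C>" "i \<noteq> j"
      then obtain i' j' where "i' \<in> \<C>" "j' \<in> \<C>" "i' \<noteq> j'" "i = ends i'" "j = ends j'"
        by blast
      with \<C>(3) show "{fst i..snd i} \<inter> {fst j..snd j} = {}"
        by (simp add: cball_ends pairwise_def disjnt_def)
    qed
    show "negligible (E - (\<Union>i\<in>ends ` \<C>. {fst i..snd i}))"
      using \<C>(4) by (simp add: cball_ends)
    show "fst i < snd i \<and> {fst i..snd i} \<subseteq> V \<and> P (fst i) (snd i)" if "i \<in> ends ` \<C>" for i
    proof -
      from that obtain c \<rho> where c\<rho>: "(c, \<rho>) \<in> \<C>" "i = (c - \<rho>, c + \<rho>)"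
        by (auto simp: ends_def)
      then have "0 < \<rho> \<and> cball c \<rho> \<subseteq> V \<and> P (c - \<rho>) (c + \<rho>)"
        using \<C>(2) unfolding K_def by blast
      then show ?thesis using c\<rho>(2) by (simp add: cball_eq_atLeastAtMost)
    qed
    show "countable (ends ` \<C>)" using \<C>(1) by (rule countable_image)
  qed
qed

lemma emeasure_lborel_negligible:
  fixes N :: "real set"
  assumes "negligible N" "N \<in> sets borel"
  shows "emeasure lborel N = 0"
  using assms by (simp add: negligible_iff_null_sets null_sets_def)

lemma Vitali_covering_finely_covered_approx:
  fixes E :: "real set" and e :: real
  assumes E: "E \<in> sets borel" "E \<subseteq> finely_covered P" and "0 < e"
  obtains \<C> where "countable \<C>" "\<And>i. i \<in> \<C> \<Longrightarrow> fst i < snd i \<and> P (fst i) (snd i)"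
    "disjoint_family_on (\<lambda>i. {fst i..snd i}) \<C>"
    "emeasure lborel (E - (\<Union>i\<in>\<C>. {fst i..snd i})) = 0"
    "emeasure lborel ((\<Union>i\<in>\<C>. {fst i..snd i}) - E) < e"
proof -
  have "E \<in> sets lebesgue" using E by simp
  then obtain T where T: "open T" "E \<subseteq> T" "T - E \<in> lmeasurable" "emeasure lebesgue (T - E) < e"
    using \<open>0 < e\<close> by (rule sets_lebesgue_outer_open)
  obtain \<C> where \<C>: "countable \<C>"
    "\<And>i. i \<in> \<C> \<Longrightarrow> fst i < snd i \<and> {fst i..snd i} \<subseteq> T \<and> P (fst i) (snd i)"
    "disjoint_family_on (\<lambda>i. {fst i..snd i}) \<C>" "negligible (E - (\<Union>i\<in>\<C>. {fst i..snd i}))"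
    by (rule Vitali_covering_finely_covered[OF T(1,2) E(2)]) blast
  let ?U = "\<Union>i\<in>\<C>. {fst i..snd i}"
  have U: "?U \<in> sets borel" "?U \<subseteq> T"
    using \<C>(1,2) by (auto intro: sets.countable_UN'')
  show ?thesis
  proof (rule that[OF \<C>(1) _ \<C>(3)])
    show "emeasure lborel (E - ?U) = 0"
      using \<C>(4) U E by (intro emeasure_lborel_negligible) auto
    have "emeasure lborel (?U - E) \<le> emeasure lborel (T - E)"
      using U E T(1) by (intro emeasure_mono) auto
    also have "\<dots> = emeasure lebesgue (T - E)"
      using E T(1) by simp
    finally show "emeasure lborel (?U - E) < e" using T(4) by simp
  qed (use \<C>(2) in blast)
qed

lemma measure_Int_Diff:
  assumes "emeasure M J \<noteq> \<infinity>" "J \<in> sets M" "X \<in> sets M"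
  shows "measure M ((space M - X) \<inter> J) = measure M J - measure M (X \<inter> J)"
proof -
  have "(space M - X) \<inter> J = J - X \<inter> J" using sets.sets_into_space[OF assms(2)] by blast
  then show ?thesis using assms by (simp add: measure_Diff)
qed

lemma sums_measure_Int:
  assumes "emeasure M J \<noteq> \<infinity>" "J \<in> sets M" "range X \<subseteq> sets M" "disjoint_family X"
  shows "(\<lambda>i. measure M (X i \<inter> J)) sums measure M ((\<Union>i. X i) \<inter> J)"
proof -
  have "emeasure M ((\<Union>i. X i) \<inter> J) \<le> emeasure M J"
    using assms by (intro emeasure_mono) auto
  then have "emeasure M (\<Union>i. X i \<inter> J) \<noteq> \<infinity>"
    using assms(1) by (auto simp: top_unique Int_Union2 Int_commute)
  moreover have "disjoint_family (\<lambda>i. X i \<inter> J)"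
    using assms(4) by (auto simp: disjoint_family_on_def)
  moreover have "(\<Union>i. X i \<inter> J) = (\<Union>i. X i) \<inter> J" by auto
  ultimately show ?thesis using assms(2,3) measure_UNION[of "\<lambda>i. X i \<inter> J" M] by auto
qed

lemma measure_add_eq_on_Ioc:
  fixes M N K :: "real measure"
  assumes sets: "sets M = sets borel" "sets N = sets borel" "sets K = sets borel"
    and finite: "emeasure M {c<..d} \<noteq> \<infinity>" "emeasure N {c<..d} \<noteq> \<infinity>" "emeasure K {c<..d} \<noteq> \<infinity>"
    and Ioc: "\<And>a b. measure M ({a<..b} \<inter> {c<..d}) + measure N ({a<..b} \<inter> {c<..d})
                    = measure K ({a<..b} \<inter> {c<..d})"
    and A: "A \<in> sets borel"
  shows "measure M (A \<inter> {c<..d}) + measure N (A \<inter> {c<..d}) = measure K (A \<inter> {c<..d})"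
proof -
  let ?J = "{c<..d}"
  let ?Ioc = "range (\<lambda>(a, b). {a<..b::real})"
  have space: "space M = UNIV" "space N = UNIV" "space K = UNIV"
    using sets_eq_imp_space_eq[OF sets(1)] sets_eq_imp_space_eq[OF sets(2)] sets_eq_imp_space_eq[OF sets(3)]
    by simp_all
  have "Int_stable ?Ioc"
    unfolding Int_stable_def by (auto intro!: image_eqI[of _ _ "(max _ _, min _ _)"])
  moreover have "?Ioc \<subseteq> Pow UNIV" by simp
  moreover have "A \<in> sigma_sets UNIV ?Ioc"
    using A by (simp add: borel_sigma_sets_Ioc sets_measure_of)
  ultimately show ?thesis
  proof (induction rule: sigma_sets_induct_disjoint)
    case (basic X)
    then show ?case using Ioc by auto
  next
    case empty
    then show ?case by simp
  next
    case (compl X)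
    then have "X \<in> sets borel" by (simp add: borel_sigma_sets_Ioc sets_measure_of)
    then show ?case
      using measure_Int_Diff[of M ?J X] measure_Int_Diff[of N ?J X] measure_Int_Diff[of K ?J X]
        compl(2) Ioc[of c d] finite sets space
      by simp
  next
    case (union X)
    then have "range X \<subseteq> sets borel" by (simp add: borel_sigma_sets_Ioc sets_measure_of)
    then have "(\<lambda>i. measure M (X i \<inter> ?J) + measure N (X i \<inter> ?J))
        sums (measure M ((\<Union>i. X i) \<inter> ?J) + measure N ((\<Union>i. X i) \<inter> ?J))"
      "(\<lambda>i. measure K (X i \<inter> ?J)) sums measure K ((\<Union>i. X i) \<inter> ?J)"
      using sums_measure_Int[of M ?J X] sums_measure_Int[of N ?J X] sums_measure_Int[of K ?J X]
        union(1) finite sets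
      by (auto intro: sums_add)
    then show ?case using union(3) sums_unique2 by simp
  qed
qed

lemma emeasure_le_if_bounded_le:
  fixes M N :: "real measure"
  assumes sets: "sets M = sets borel" "sets N = sets borel" and A: "A \<in> sets borel"
    and le: "\<And>n::nat. emeasure M (A \<inter> {-real n<..real n}) \<le> emeasure N (A \<inter> {-real n<..real n})"
  shows "emeasure M A \<le> emeasure N A"
proof -
  define A' where "A' n = A \<inter> {-real n<..real n}" for n
  have "A \<subseteq> (\<Union>n. A' n)"
  proof
    fix x assume "x \<in> A"
    obtain n :: nat where "\<bar>x\<bar> < real n" using reals_Archimedean2 by blast
    with \<open>x \<in> A\<close> have "x \<in> A' n" by (simp add: A'_def abs_less_iff)
    then show "x \<in> (\<Union>n. A' n)" by blast
  qed
  moreover have "(\<Union>n. A' n) \<subseteq> A" by (auto simp: A'_def)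
  ultimately have U: "(\<Union>n. A' n) = A" by (rule antisym[rotated])
  have inc: "incseq A'" unfolding A'_def by (rule incseq_SucI) auto
  have "A' n \<in> sets borel" for n using A by (simp add: A'_def)
  then have "range A' \<subseteq> sets M" "range A' \<subseteq> sets N" using sets by auto
  then have "emeasure M A = (SUP n. emeasure M (A' n))" "emeasure N A = (SUP n. emeasure N (A' n))"
    using SUP_emeasure_incseq[of A' M, OF _ inc] SUP_emeasure_incseq[of A' N, OF _ inc] by (simp_all add: U)
  moreover have "(SUP n. emeasure M (A' n)) \<le> (SUP n. emeasure N (A' n))"
    using le unfolding A'_def by (rule SUP_mono')
  ultimately show ?thesis by simp
qed

lemma DERIV_if_straddle_slopes:
  fixes F :: "real \<Rightarrow> real"
  assumes "\<And>e. 0 < e \<Longrightarrow> \<exists>d>0. \<forall>a b. a \<le> x \<longrightarrow> x \<le> b \<longrightarrow> a < b \<longrightarrow> b - a < d \<longrightarrow>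
             \<bar>F b - F a - l * (b - a)\<bar> \<le> e * (b - a)"
  shows "(F has_real_derivative l) (at x)"
  unfolding DERIV_def
proof (rule LIM_I)
  fix e :: real assume "0 < e"
  then obtain d where "d > 0" and d: "\<And>a b. a \<le> x \<Longrightarrow> x \<le> b \<Longrightarrow> a < b \<Longrightarrow> b - a < d \<Longrightarrow>
      \<bar>F b - F a - l * (b - a)\<bar> \<le> e / 2 * (b - a)"
    using assms[of "e / 2"] by auto
  have "\<bar>(F (x + h) - F x) / h - l\<bar> < e" if "h \<noteq> 0" "\<bar>h\<bar> < d" for h
  proof -
    have "\<bar>F (x + h) - F x - l * h\<bar> \<le> e / 2 * \<bar>h\<bar>"
    proof (cases "h > 0")
      case True
      then show ?thesis using d[of x "x + h"] that by simp
    next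
      case False
      then show ?thesis using d[of "x + h" x] that by (simp add: abs_minus_commute algebra_simps)
    qed
    moreover have "(F (x + h) - F x) / h - l = (F (x + h) - F x - l * h) / h"
      using that by (simp add: field_simps)
    moreover have "0 < e * \<bar>h\<bar>" using that \<open>0 < e\<close> by simp
    ultimately show ?thesis
      using that by (simp add: abs_divide divide_less_eq)
  qed
  then show "\<exists>d>0. \<forall>h. h \<noteq> 0 \<and> norm (h - 0) < d \<longrightarrow> norm ((F (x + h) - F x) / h - l) < e"
    using \<open>d > 0\<close> by auto
qed

locale mono_nonexpansive =
  fixes F :: "real \<Rightarrow> real"
  assumes mono_le: "x \<le> y \<Longrightarrow> F x \<le> F y"
    and increment_le: "x \<le> y \<Longrightarrow> F y - F x \<le> y - x"
begin

lemma lipschitz: "1-lipschitz_on UNIV F"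
proof (rule lipschitz_onI)
  fix x y :: real
  show "dist (F x) (F y) \<le> 1 * dist x y"
    using mono_le[of x y] increment_le[of x y] mono_le[of y x] increment_le[of y x]
    by (cases "x \<le> y") (auto simp: dist_real_def)
qed simp

lemma continuous_on: "continuous_on S F"
  using lipschitz_on_continuous_on[OF lipschitz] continuous_on_subset by blast

lemma isCont: "isCont F x"
  using continuous_on[of UNIV] by (simp add: continuous_on_eq_continuous_at)

lemma complement: "mono_nonexpansive (\<lambda>x. x - F x)"
  by unfold_locales (use mono_le increment_le in force)+

lemma emeasure_interval_measure_Ioc: "a \<le> b \<Longrightarrow> emeasure (interval_measure F) {a<..b} = F b - F a"
  by (intro Lebesgue_Measure.emeasure_interval_measure_Ioc mono_le continuous_within_subset[OF isCont]) auto

lemma emeasure_interval_measure_Icc: "a \<le> b \<Longrightarrow> emeasure (interval_measure F) {a..b} = F b - F a"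
  by (intro Lebesgue_Measure.emeasure_interval_measure_Icc mono_le continuous_on)

lemma emeasure_interval_measure_UN_Icc:
  assumes "countable \<C>" "disjoint_family_on (\<lambda>i. {fst i..snd i}) \<C>"
    and "\<And>i. i \<in> \<C> \<Longrightarrow> fst i \<le> snd i"
  shows "emeasure (interval_measure F) (\<Union>i\<in>\<C>. {fst i..snd i})
    = (\<integral>\<^sup>+i. ennreal (F (snd i) - F (fst i)) \<partial>count_space \<C>)"
proof -
  have "emeasure (interval_measure F) (\<Union>i\<in>\<C>. {fst i..snd i})
      = (\<integral>\<^sup>+i. emeasure (interval_measure F) {fst i..snd i} \<partial>count_space \<C>)"
    using assms by (intro emeasure_UN_countable) auto
  also have "\<dots> = (\<integral>\<^sup>+i. ennreal (F (snd i) - F (fst i)) \<partial>count_space \<C>)"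
    using assms(3) by (intro nn_integral_cong) (simp add: emeasure_interval_measure_Icc)
  finally show ?thesis .
qed

lemma measure_interval_measure_Ioc: "a \<le> b \<Longrightarrow> measure (interval_measure F) {a<..b} = F b - F a"
  by (simp add: measure_def emeasure_interval_measure_Ioc mono_le)

lemma measure_add_complement_Ioc:
  "measure (interval_measure F) {a<..b} + measure (interval_measure (\<lambda>x. x - F x)) {a<..b}
    = measure lborel {a<..b}"
proof -
  interpret complement: mono_nonexpansive "\<lambda>x. x - F x" by (rule complement)
  show ?thesis
    by (cases "a \<le> b")
      (simp_all add: measure_interval_measure_Ioc complement.measure_interval_measure_Ioc)
qed

lemma emeasure_interval_measure_Int_Ioc_le:
  assumes A: "A \<in> sets borel"
  shows "emeasure (interval_measure F) (A \<inter> {c<..d}) \<le> emeasure lborel (A \<inter> {c<..d})"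
proof -
  interpret complement: mono_nonexpansive "\<lambda>x. x - F x" by (rule complement)
  have finite: "emeasure X {c<..d} < \<infinity>"
    if "X \<in> {interval_measure F, interval_measure (\<lambda>x. x - F x), lborel}" for X
    using that by (cases "c \<le> d")
      (auto simp: emeasure_interval_measure_Ioc complement.emeasure_interval_measure_Ioc)
  have "measure (interval_measure F) (A \<inter> {c<..d}) + measure (interval_measure (\<lambda>x. x - F x)) (A \<inter> {c<..d})
      = measure lborel (A \<inter> {c<..d})"
  proof (rule measure_add_eq_on_Ioc)
    show "measure (interval_measure F) ({a<..b} \<inter> {c<..d})
        + measure (interval_measure (\<lambda>x. x - F x)) ({a<..b} \<inter> {c<..d})
        = measure lborel ({a<..b} \<inter> {c<..d})" for a b
    proof -
      have "{a<..b} \<inter> {c<..d} = {max a c<..min b d}" by auto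
      then show ?thesis by (simp add: measure_add_complement_Ioc)
    qed
  qed (use A finite[of "interval_measure F"] finite[of "interval_measure (\<lambda>x. x - F x)"]
      finite[of lborel] in auto)
  then have "measure (interval_measure F) (A \<inter> {c<..d}) \<le> measure lborel (A \<inter> {c<..d})"
    using measure_nonneg[of "interval_measure (\<lambda>x. x - F x)" "A \<inter> {c<..d}"] by linarith
  moreover have "emeasure X (A \<inter> {c<..d}) = ennreal (measure X (A \<inter> {c<..d}))"
    if "X \<in> {interval_measure F, lborel}" for X
  proof -
    have "emeasure X (A \<inter> {c<..d}) \<le> emeasure X {c<..d}"
      using that A by (intro emeasure_mono) auto
    also have "\<dots> < \<infinity>" using that finite by auto
    finally show ?thesis by (intro emeasure_eq_ennreal_measure) simp
  qed
  ultimately show ?thesis by (simp add: ennreal_leI)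
qed

lemma emeasure_interval_measure_le:
  assumes "A \<in> sets borel"
  shows "emeasure (interval_measure F) A \<le> emeasure lborel A"
  by (rule emeasure_le_if_bounded_le[OF _ _ assms emeasure_interval_measure_Int_Ioc_le[OF assms]]) simp_all

end

lemma mono_nonexpansive_id: "mono_nonexpansive (\<lambda>x. x)"
  by unfold_locales simp_all

lemma emeasure_lborel_UN_Icc:
  assumes "countable \<C>" "disjoint_family_on (\<lambda>i. {fst i..snd i}) \<C>"
    and "\<And>i. i \<in> \<C> \<Longrightarrow> fst i \<le> snd i"
  shows "emeasure lborel (\<Union>i\<in>\<C>. {fst i..snd i}) = (\<integral>\<^sup>+i. ennreal (snd i - fst i) \<partial>count_space \<C>)"
  using mono_nonexpansive.emeasure_interval_measure_UN_Icc[OF mono_nonexpansive_id assms]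
  by (simp add: lborel_eq_real)

context mono_nonexpansive
begin

lemma slope_below_pos:
  assumes "x \<in> finely_covered (\<lambda>a b. F b - F a < r * (b - a))"
  shows "0 < r"
proof -
  obtain a b where "a < x" "x < b" "F b - F a < r * (b - a)"
    using assms zero_less_one unfolding finely_covered_def by blast
  moreover have "0 \<le> F b - F a" using mono_le[of a b] \<open>a < x\<close> \<open>x < b\<close> by simp
  ultimately have "0 < r * (b - a)" by linarith
  with \<open>a < x\<close> \<open>x < b\<close> show ?thesis by (simp add: zero_less_mult_iff)
qed

lemma slope_below_two: "x \<in> finely_covered (\<lambda>a b. F b - F a < 2 * (b - a))"
  unfolding finely_covered_def
proof (intro CollectI allI impI)
  fix d :: real assume "0 < d"
  then show "\<exists>a b. a < x \<and> x < b \<and> b - a < d \<and> F b - F a < 2 * (b - a)"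
    using increment_le[of "x - d / 4" "x + d / 4"]
    by (intro exI[of _ "x - d / 4"] exI[of _ "x + d / 4"]) simp
qed

lemma emeasure_interval_measure_slope_below:
  assumes E: "E \<in> sets borel" "E \<subseteq> finely_covered (\<lambda>a b. F b - F a < r * (b - a))" and "0 < r"
  shows "emeasure (interval_measure F) E \<le> ennreal r * emeasure lborel E"
proof (rule ennreal_le_epsilon)
  fix e :: real assume "0 < e"
  obtain \<C> where \<C>: "countable \<C>"
    "\<And>i. i \<in> \<C> \<Longrightarrow> fst i < snd i \<and> F (snd i) - F (fst i) < r * (snd i - fst i)"
    "disjoint_family_on (\<lambda>i. {fst i..snd i}) \<C>"
    "emeasure lborel (E - (\<Union>i\<in>\<C>. {fst i..snd i})) = 0"
    "emeasure lborel ((\<Union>i\<in>\<C>. {fst i..snd i}) - E) < e / r"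
    using Vitali_covering_finely_covered_approx[OF E, of "e / r"] \<open>0 < e\<close> \<open>0 < r\<close> by auto
  have le: "fst i \<le> snd i" if "i \<in> \<C>" for i using \<C>(2)[OF that] by simp
  define U where "U = (\<Union>i\<in>\<C>. {fst i..snd i})"
  have U: "U \<in> sets borel" using \<C>(1) by (auto simp: U_def intro: sets.countable_UN'')
  have "emeasure (interval_measure F) E \<le> emeasure (interval_measure F) (U \<union> (E - U))"
    using U E by (intro emeasure_mono) auto
  also have "\<dots> \<le> emeasure (interval_measure F) U + emeasure (interval_measure F) (E - U)"
    using U E by (intro emeasure_subadditive) auto
  also have "emeasure (interval_measure F) (E - U) = 0"
    using emeasure_interval_measure_le[of "E - U"] \<C>(4) U E by (simp add: U_def)
  also have "emeasure (interval_measure F) U = (\<integral>\<^sup>+i. ennreal (F (snd i) - F (fst i)) \<partial>count_space \<C>)"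
    unfolding U_def using \<C>(1,3) le by (rule emeasure_interval_measure_UN_Icc)
  also have "\<dots> \<le> (\<integral>\<^sup>+i. ennreal r * ennreal (snd i - fst i) \<partial>count_space \<C>)"
  proof (intro nn_integral_mono)
    fix i assume "i \<in> space (count_space \<C>)"
    then have "F (snd i) - F (fst i) \<le> r * (snd i - fst i)" "fst i \<le> snd i"
      using \<C>(2)[of i] by auto
    then show "ennreal (F (snd i) - F (fst i)) \<le> ennreal r * ennreal (snd i - fst i)"
      using \<open>0 < r\<close> by (simp add: ennreal_mult[symmetric] ennreal_leI)
  qed
  also have "\<dots> = ennreal r * emeasure lborel U"
    unfolding U_def using \<C>(1,3) le by (simp add: emeasure_lborel_UN_Icc nn_integral_cmult)
  also have "emeasure lborel U \<le> emeasure lborel E + emeasure lborel (U - E)"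
    using U E emeasure_subadditive[of E lborel "U - E"] emeasure_mono[of U "E \<union> (U - E)" lborel]
    by auto
  also have "emeasure lborel (U - E) \<le> e / r" using \<C>(5) by (simp add: U_def)
  finally show "emeasure (interval_measure F) E \<le> ennreal r * emeasure lborel E + ennreal e"
    using \<open>0 < r\<close> \<open>0 < e\<close> by (simp add: distrib_left mult_left_mono add_left_mono ennreal_mult[symmetric])
qed

lemma emeasure_interval_measure_slope_above:
  assumes E: "E \<in> sets borel" "E \<subseteq> finely_covered (\<lambda>a b. s * (b - a) < F b - F a)" and "0 \<le> s"
  shows "ennreal s * emeasure lborel E \<le> emeasure (interval_measure F) E"
proof (rule ennreal_le_epsilon)
  fix e :: real assume "0 < e"
  obtain \<C> where \<C>: "countable \<C>"
    "\<And>i. i \<in> \<C> \<Longrightarrow> fst i < snd i \<and> s * (snd i - fst i) < F (snd i) - F (fst i)"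
    "disjoint_family_on (\<lambda>i. {fst i..snd i}) \<C>"
    "emeasure lborel (E - (\<Union>i\<in>\<C>. {fst i..snd i})) = 0"
    "emeasure lborel ((\<Union>i\<in>\<C>. {fst i..snd i}) - E) < e"
    using Vitali_covering_finely_covered_approx[OF E \<open>0 < e\<close>] by auto
  have le: "fst i \<le> snd i" if "i \<in> \<C>" for i using \<C>(2)[OF that] by simp
  define U where "U = (\<Union>i\<in>\<C>. {fst i..snd i})"
  have U: "U \<in> sets borel" using \<C>(1) by (auto simp: U_def intro: sets.countable_UN'')
  have "emeasure lborel E \<le> emeasure lborel U + emeasure lborel (E - U)"
    using U E emeasure_subadditive[of U lborel "E - U"] emeasure_mono[of E "U \<union> (E - U)" lborel]
    by auto
  then have "ennreal s * emeasure lborel E \<le> ennreal s * emeasure lborel U"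
    using \<C>(4) by (simp add: U_def mult_left_mono)
  also have "\<dots> = (\<integral>\<^sup>+i. ennreal s * ennreal (snd i - fst i) \<partial>count_space \<C>)"
    unfolding U_def using \<C>(1,3) le by (simp add: emeasure_lborel_UN_Icc nn_integral_cmult)
  also have "\<dots> \<le> (\<integral>\<^sup>+i. ennreal (F (snd i) - F (fst i)) \<partial>count_space \<C>)"
  proof (intro nn_integral_mono)
    fix i assume "i \<in> space (count_space \<C>)"
    then have "s * (snd i - fst i) \<le> F (snd i) - F (fst i)" "fst i \<le> snd i"
      using \<C>(2)[of i] by auto
    then show "ennreal s * ennreal (snd i - fst i) \<le> ennreal (F (snd i) - F (fst i))"
      using \<open>0 \<le> s\<close> by (simp add: ennreal_mult[symmetric] ennreal_leI)
  qed
  also have "\<dots> = emeasure (interval_measure F) U"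
    unfolding U_def using \<C>(1,3) le by (rule emeasure_interval_measure_UN_Icc[symmetric])
  also have "\<dots> \<le> emeasure (interval_measure F) E + emeasure (interval_measure F) (U - E)"
    using U E emeasure_subadditive[of E "interval_measure F" "U - E"]
      emeasure_mono[of U "E \<union> (U - E)" "interval_measure F"]
    by auto
  also have "emeasure (interval_measure F) (U - E) \<le> emeasure lborel (U - E)"
    using U E by (intro emeasure_interval_measure_le) auto
  also have "\<dots> \<le> e" using \<C>(5) by (simp add: U_def)
  finally show "ennreal s * emeasure lborel E \<le> emeasure (interval_measure F) E + ennreal e"
    by (simp add: add_left_mono)
qed

lemma negligible_slope_gap:
  assumes "r < s"
  shows "negligible (finely_covered (\<lambda>a b. F b - F a < r * (b - a))
    \<inter> finely_covered (\<lambda>a b. s * (b - a) < F b - F a))" (is "negligible ?G")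
proof (cases "0 < r")
  case False
  have "x \<notin> finely_covered (\<lambda>a b. F b - F a < r * (b - a))" for x
    using slope_below_pos[of x r] False by blast
  then have "?G = {}" by blast
  then show ?thesis by simp
next
  case True
  show ?thesis
  proof (rule negligible_on_intervals[THEN iffD2], intro allI)
    fix a b :: real
    define E where "E = ?G \<inter> cbox a b"
    have E: "E \<in> sets borel" using finely_covered_borel by (auto simp: E_def)
    have "ennreal s * emeasure lborel E \<le> emeasure (interval_measure F) E"
      using E \<open>r < s\<close> True by (intro emeasure_interval_measure_slope_above) (auto simp: E_def)
    also have "\<dots> \<le> ennreal r * emeasure lborel E"
      using E True by (intro emeasure_interval_measure_slope_below) (auto simp: E_def)
    finally have le: "ennreal s * emeasure lborel E \<le> ennreal r * emeasure lborel E" .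
    have "emeasure lborel E \<le> emeasure lborel (cbox a b)"
      using E by (intro emeasure_mono) (auto simp: E_def)
    then have "emeasure lborel E = ennreal (measure lborel E)"
      using emeasure_lborel_cbox_finite[of a b] by (intro emeasure_eq_ennreal_measure) auto
    with le True \<open>r < s\<close> have "s * measure lborel E \<le> r * measure lborel E"
      by (simp add: ennreal_mult[symmetric] ennreal_le_iff)
    then have "measure lborel E = 0"
      using \<open>r < s\<close> measure_nonneg[of lborel E] by (simp add: mult_le_cancel_right)
    then show "negligible (?G \<inter> cbox a b)"
      using E \<open>emeasure lborel E = _\<close> by (simp add: E_def negligible_iff_emeasure0)
  qed
qed

lemma straddle_slope_closed:
  assumes strict: "\<And>a b. a < x \<Longrightarrow> x < b \<Longrightarrow> b - a < d \<Longrightarrow> \<bar>F b - F a - l * (b - a)\<bar> \<le> c * (b - a)"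
    and ab: "a \<le> x" "x \<le> b" "a < b" "b - a < d"
  shows "\<bar>F b - F a - l * (b - a)\<bar> \<le> c * (b - a)"
proof (rule field_le_epsilon)
  fix \<epsilon> :: real assume "0 < \<epsilon>"
  define \<eta> where "\<eta> = min (\<epsilon> / 2) ((b - a) / 2)"
  have \<eta>: "0 < \<eta>" "\<eta> < b - a" "2 * \<eta> \<le> \<epsilon>"
    using \<open>0 < \<epsilon>\<close> ab by (auto simp: \<eta>_def min_less_iff_disj min_le_iff_disj)
  obtain t where t: "\<bar>t\<bar> \<le> \<eta>" "a + t < x" "x < b + t"
  proof (cases "x = a")
    case True then show ?thesis using that[of "- \<eta>"] \<eta> by simp
  next
    case False
    show ?thesis
    proof (cases "x = b")
      case True then show ?thesis using that[of \<eta>] \<eta> by simp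
    next
      case False then show ?thesis using that[of 0] \<open>x \<noteq> a\<close> ab \<eta> by simp
    qed
  qed
  have "\<bar>F (b + t) - F (a + t) - l * (b - a)\<bar> \<le> c * (b - a)"
    using strict[of "a + t" "b + t"] t ab by simp
  moreover have "\<bar>F (b + t) - F b\<bar> \<le> \<eta>" "\<bar>F (a + t) - F a\<bar> \<le> \<eta>"
    using lipschitz_onD[OF lipschitz, of "b + t" b] lipschitz_onD[OF lipschitz, of "a + t" a] t(1)
    by (simp_all add: dist_real_def)
  ultimately show "\<bar>F b - F a - l * (b - a)\<bar> \<le> c * (b - a) + \<epsilon>"
    using \<eta>(3) by linarith
qed

lemma differentiable_if_no_slope_gap:
  assumes gap: "\<And>r s. r \<in> \<rat> \<Longrightarrow> s \<in> \<rat> \<Longrightarrow> r < s \<Longrightarrow>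
      x \<notin> finely_covered (\<lambda>a b. F b - F a < r * (b - a)) \<inter> finely_covered (\<lambda>a b. s * (b - a) < F b - F a)"
  shows "F differentiable (at x)"
proof -
  define L where "L = {r. x \<in> finely_covered (\<lambda>a b. F b - F a < r * (b - a))}"
  have bdd: "bdd_below L"
  proof (rule bdd_belowI)
    show "0 \<le> r" if "r \<in> L" for r using slope_below_pos that by (simp add: L_def less_imp_le)
  qed
  have "2 \<in> L" using slope_below_two by (simp add: L_def)
  define l where "l = Inf L"
  have lower: "\<exists>d>0. \<forall>a b. a < x \<longrightarrow> x < b \<longrightarrow> b - a < d \<longrightarrow> (l - e) * (b - a) \<le> F b - F a"
    if "0 < e" for e
  proof -
    have "l - e \<notin> L" using cInf_lower[OF _ bdd, of "l - e"] that by (auto simp: l_def)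
    then show ?thesis by (simp add: L_def not_finely_covered_iff not_less)
  qed
  have upper: "\<exists>d>0. \<forall>a b. a < x \<longrightarrow> x < b \<longrightarrow> b - a < d \<longrightarrow> F b - F a \<le> (l + e) * (b - a)"
    if "0 < e" for e
  proof -
    obtain r where r: "r \<in> \<rat>" "l < r" "r < l + e / 2"
      using Rats_dense_in_real[of l "l + e / 2"] \<open>0 < e\<close> by auto
    obtain s where s: "s \<in> \<rat>" "r < s" "s < l + e"
      using Rats_dense_in_real[of r "l + e"] r by auto
    obtain r' where "r' \<in> L" "r' < r"
      using cInf_less_iff[OF _ bdd] \<open>2 \<in> L\<close> r(2) by (auto simp: l_def)
    then have "x \<in> finely_covered (\<lambda>a b. F b - F a < r * (b - a))"
      using finely_covered_mono[of "\<lambda>a b. F b - F a < r' * (b - a)" "\<lambda>a b. F b - F a < r * (b - a)"]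
      by (force simp: L_def intro: less_le_trans mult_right_mono)
    then have "x \<notin> finely_covered (\<lambda>a b. s * (b - a) < F b - F a)"
      using gap[OF r(1) s(1,2)] by blast
    then obtain d where "0 < d" and d: "\<And>a b. a < x \<Longrightarrow> x < b \<Longrightarrow> b - a < d \<Longrightarrow> F b - F a \<le> s * (b - a)"
      by (auto simp: not_finely_covered_iff not_less)
    have "F b - F a \<le> (l + e) * (b - a)" if "a < x" "x < b" "b - a < d" for a b
    proof -
      have "s * (b - a) \<le> (l + e) * (b - a)"
        using s(3) that by (intro mult_right_mono) auto
      then show ?thesis using d[OF that] by linarith
    qed
    then show ?thesis using \<open>0 < d\<close> by blast
  qed
  have "\<exists>d>0. \<forall>a b. a \<le> x \<longrightarrow> x \<le> b \<longrightarrow> a < b \<longrightarrow> b - a < d \<longrightarrow>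
      \<bar>F b - F a - l * (b - a)\<bar> \<le> e * (b - a)" if "0 < e" for e
  proof -
    obtain d1 d2 where "0 < d1" "0 < d2"
      and d1: "\<And>a b. a < x \<Longrightarrow> x < b \<Longrightarrow> b - a < d1 \<Longrightarrow> (l - e) * (b - a) \<le> F b - F a"
      and d2: "\<And>a b. a < x \<Longrightarrow> x < b \<Longrightarrow> b - a < d2 \<Longrightarrow> F b - F a \<le> (l + e) * (b - a)"
      using lower[of e] upper[of e] \<open>0 < e\<close> by blast
    have strict: "\<bar>F b - F a - l * (b - a)\<bar> \<le> e * (b - a)"
      if "a < x" "x < b" "b - a < min d1 d2" for a b
      using d1[of a b] d2[of a b] that by (simp add: abs_le_iff algebra_simps)
    show ?thesis
      using \<open>0 < d1\<close> \<open>0 < d2\<close>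
      by (intro exI[of _ "min d1 d2"] conjI allI impI straddle_slope_closed[where d = "min d1 d2", OF strict]) auto
  qed
  then show ?thesis
    using DERIV_if_straddle_slopes real_differentiable_def by blast
qed

theorem negligible_not_differentiable: "negligible {x. \<not> F differentiable (at x)}"
proof -
  define gap where "gap = (\<lambda>(r, s). finely_covered (\<lambda>a b. F b - F a < r * (b - a))
    \<inter> finely_covered (\<lambda>a b. s * (b - a) < F b - F a))"
  let ?Q = "SIGMA r:\<rat>. {s \<in> \<rat>. r < s}"
  have "negligible (\<Union>(gap ` ?Q))"
  proof (rule negligible_countable_Union)
    have "countable ?Q" using countable_rat by (intro countable_SIGMA) auto
    then show "countable (gap ` ?Q)" by (rule countable_image)
    show "negligible S" if "S \<in> gap ` ?Q" for S
      using that negligible_slope_gap by (auto simp: gap_def)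
  qed
  moreover have "{x. \<not> F differentiable (at x)} \<subseteq> \<Union>(gap ` ?Q)"
  proof
    fix x assume x: "x \<in> {x. \<not> F differentiable (at x)}"
    have "\<exists>r s. r \<in> \<rat> \<and> s \<in> \<rat> \<and> r < s \<and> x \<in> gap (r, s)"
    proof (rule ccontr)
      assume "\<not> ?thesis"
      then have "F differentiable (at x)"
        by (intro differentiable_if_no_slope_gap) (auto simp: gap_def)
      with x show False by simp
    qed
    then show "x \<in> \<Union>(gap ` ?Q)" by fastforce
  qed
  ultimately show ?thesis by (rule negligible_subset)
qed

end

section \<open>Integrating the derivative of a monotone 1-Lipschitz function\<close>

lemma dominated_convergence_ae:
  fixes f :: "nat \<Rightarrow> real \<Rightarrow> real"
  assumes N: "negligible N"
    and f: "\<And>k. f k integrable_on S" and h: "h integrable_on S"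
    and le: "\<And>k x. x \<in> S \<Longrightarrow> \<bar>f k x\<bar> \<le> h x"
    and conv: "\<And>x. x \<in> S - N \<Longrightarrow> (\<lambda>k. f k x) \<longlonglongrightarrow> g x"
  shows "g integrable_on S" "(\<lambda>k. integral S (f k)) \<longlonglongrightarrow> integral S g"
proof -
  have integrable_iff: "\<phi> integrable_on S \<longleftrightarrow> \<phi> integrable_on (S - N)" for \<phi> :: "real \<Rightarrow> real"
    by (rule integrable_spike_set_eq) (auto intro: negligible_subset[OF N])
  have integral_eq: "integral S \<phi> = integral (S - N) \<phi>" for \<phi> :: "real \<Rightarrow> real"
    by (rule integral_spike_set) (auto intro: negligible_subset[OF N])
  have "f k integrable_on (S - N)" "h integrable_on (S - N)" for k
    using f h integrable_iff by blast+
  moreover have "norm (f k x) \<le> h x" if "x \<in> S - N" for k x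
    using le that by simp
  ultimately have "g integrable_on (S - N)" "(\<lambda>k. integral (S - N) (f k)) \<longlonglongrightarrow> integral (S - N) g"
    using dominated_convergence[of f "S - N" h g] conv by blast+
  then show "g integrable_on S" "(\<lambda>k. integral S (f k)) \<longlonglongrightarrow> integral S g"
    by (simp_all add: integrable_iff integral_eq)
qed

definition diff_quot :: "(real \<Rightarrow> real) \<Rightarrow> nat \<Rightarrow> real \<Rightarrow> real" where
  "diff_quot F n x = real (Suc n) * (F (x + 1 / real (Suc n)) - F x)"

lemma diff_quot_tendsto_deriv:
  assumes "F differentiable (at x)"
  shows "(\<lambda>n. diff_quot F n x) \<longlonglongrightarrow> deriv F x"
proof -
  have "((\<lambda>h. (F (x + h) - F x) / h) \<longlongrightarrow> deriv F x) (at 0)"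
    using assms DERIV_deriv_iff_real_differentiable by (simp add: DERIV_def)
  moreover have "(\<lambda>n. 1 / real (Suc n)) \<longlonglongrightarrow> 0"
    by (rule LIMSEQ_Suc[OF lim_const_over_n])
  ultimately have "(\<lambda>n. (F (x + 1 / real (Suc n)) - F x) / (1 / real (Suc n))) \<longlonglongrightarrow> deriv F x"
    unfolding LIMSEQ_SEQ_conv[symmetric] by (elim allE[of _ "\<lambda>n. 1 / real (Suc n)"]) simp
  then show ?thesis by (simp add: diff_quot_def mult.commute)
qed

context mono_nonexpansive
begin

lemma diff_quot_bounds: "0 \<le> diff_quot F n x" "diff_quot F n x \<le> 1"
proof -
  define k where "k = real (Suc n)"
  have "0 < k" "k * (1 / k) = 1" by (simp_all add: k_def)
  moreover have "0 \<le> F (x + 1 / k) - F x" "F (x + 1 / k) - F x \<le> 1 / k"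
    using mono_le[of x "x + 1 / k"] increment_le[of x "x + 1 / k"] \<open>0 < k\<close> by auto
  ultimately have "0 \<le> k * (F (x + 1 / k) - F x)" "k * (F (x + 1 / k) - F x) \<le> 1"
    by (metis mult_nonneg_nonneg less_imp_le, metis mult_left_mono less_imp_le)
  then show "0 \<le> diff_quot F n x" "diff_quot F n x \<le> 1"
    by (simp_all add: diff_quot_def k_def)
qed

lemma continuous_on_diff_quot: "continuous_on S (diff_quot F n)"
  unfolding diff_quot_def
  by (intro continuous_intros continuous_on_compose2[OF continuous_on[of UNIV]]) auto

lemma integral_near_point:
  assumes "0 < \<delta>"
  shows "\<delta> * F c \<le> integral {c..c + \<delta>} F" "integral {c..c + \<delta>} F \<le> \<delta> * (F c + \<delta>)"
proof -
  have "integral {c..c + \<delta>} (\<lambda>x. F c) \<le> integral {c..c + \<delta>} F"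
    by (intro integral_le integrable_continuous_interval continuous_on continuous_intros mono_le) auto
  then show "\<delta> * F c \<le> integral {c..c + \<delta>} F" using assms by simp
  have "F x \<le> F c + \<delta>" if "x \<in> {c..c + \<delta>}" for x
    using increment_le[of c x] that by simp
  then have "integral {c..c + \<delta>} F \<le> integral {c..c + \<delta>} (\<lambda>x. F c + \<delta>)"
    by (intro integral_le integrable_continuous_interval continuous_on continuous_intros)
  then show "integral {c..c + \<delta>} F \<le> \<delta> * (F c + \<delta>)" using assms by simp
qed

lemma integral_diff_quot_approx:
  assumes "a \<le> b"
  shows "\<bar>integral {a..b} (diff_quot F n) - (F b - F a)\<bar> \<le> 1 / real (Suc n)"
proof -
  define k where "k = real (Suc n)"
  define \<delta> where "\<delta> = 1 / k"
  have \<delta>: "0 < \<delta>" "k * (\<delta> * y) = y" for y by (simp_all add: \<delta>_def k_def)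
  have int: "F integrable_on {x..y}" for x y
    by (rule integrable_continuous_interval[OF continuous_on])
  have "integral {a..b} (\<lambda>x. F (x + \<delta>)) = integral {a + \<delta>..b + \<delta>} F"
    using integral_shift_cbox_plus[of a b F \<delta>] by (simp add: o_def add.commute)
  then have shift: "integral {a..b} (\<lambda>x. F (x + \<delta>)) - integral {a..b} F
      = integral {b..b + \<delta>} F - integral {a..a + \<delta>} F"
    using Henstock_Kurzweil_Integration.integral_combine[of a "a + \<delta>" "b + \<delta>" F]
      Henstock_Kurzweil_Integration.integral_combine[of a b "b + \<delta>" F] \<delta>(1) assms int
    by simp
  have "integral {a..b} (diff_quot F n)
      = k * (integral {a..b} (\<lambda>x. F (x + \<delta>)) - integral {a..b} F)"
  proof -
    have "diff_quot F n = (\<lambda>x. k * (F (x + \<delta>) - F x))"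
      by (simp add: diff_quot_def \<delta>_def k_def fun_eq_iff)
    moreover have "(\<lambda>x. F (x + \<delta>)) integrable_on {a..b}"
      by (intro integrable_continuous_interval continuous_on_compose2[OF continuous_on[of UNIV]]
          continuous_intros) auto
    ultimately show ?thesis
      using int by (simp only: integral_mult_right integral_diff)
  qed
  also note shift
  finally have dq: "integral {a..b} (diff_quot F n)
      = k * integral {b..b + \<delta>} F - k * integral {a..a + \<delta>} F"
    by (simp add: right_diff_distrib)
  have near: "F c \<le> k * integral {c..c + \<delta>} F \<and> k * integral {c..c + \<delta>} F \<le> F c + \<delta>" for c
  proof -
    have "k * (\<delta> * F c) \<le> k * integral {c..c + \<delta>} F" "k * integral {c..c + \<delta>} F \<le> k * (\<delta> * (F c + \<delta>))"
      using integral_near_point[OF \<delta>(1), of c] by (simp_all add: k_def mult_left_mono)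
    then show ?thesis unfolding \<delta>(2) by simp
  qed
  have "\<bar>integral {a..b} (diff_quot F n) - (F b - F a)\<bar> \<le> \<delta>"
    unfolding dq abs_le_iff using near[of a] near[of b] by linarith
  then show ?thesis by (simp add: \<delta>_def k_def)
qed

lemma integral_diff_quot_tendsto:
  assumes "a \<le> b"
  shows "(\<lambda>n. integral {a..b} (diff_quot F n)) \<longlonglongrightarrow> F b - F a"
proof (rule LIM_zero_cancel, rule Lim_null_comparison)
  show "\<forall>\<^sub>F n in sequentially. norm (integral {a..b} (diff_quot F n) - (F b - F a)) \<le> 1 / real (Suc n)"
    using integral_diff_quot_approx[OF assms] by simp
  show "(\<lambda>n. 1 / real (Suc n)) \<longlonglongrightarrow> 0"
    by (rule LIMSEQ_Suc[OF lim_const_over_n])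
qed

lemma has_integral_deriv:
  assumes "a \<le> b"
  shows "(deriv F has_integral F b - F a) {a..b}"
proof -
  have "\<bar>diff_quot F n x\<bar> \<le> 1" for n x
    using diff_quot_bounds[of n x] by simp
  moreover have "diff_quot F n integrable_on {a..b}" for n
    by (rule integrable_continuous_interval[OF continuous_on_diff_quot])
  moreover have "(\<lambda>n. diff_quot F n x) \<longlonglongrightarrow> deriv F x" if "x \<in> {a..b} - {x. \<not> F differentiable (at x)}" for x
    using that diff_quot_tendsto_deriv by simp
  ultimately have "deriv F integrable_on {a..b}"
    "(\<lambda>n. integral {a..b} (diff_quot F n)) \<longlonglongrightarrow> integral {a..b} (deriv F)"
    using dominated_convergence_ae[OF negligible_not_differentiable, of "diff_quot F" "{a..b}" "\<lambda>_. 1" "deriv F"]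
    by auto
  moreover have "integral {a..b} (deriv F) = F b - F a"
    using LIMSEQ_unique[OF calculation(2) integral_diff_quot_tendsto[OF assms]] .
  ultimately show ?thesis by (metis has_integral_integral)
qed

lemma square_deriv_integrable:
  shows "(\<lambda>x. (deriv F x)\<^sup>2) integrable_on {a..b}"
    and "(\<lambda>n. integral {a..b} (\<lambda>x. (diff_quot F n x)\<^sup>2)) \<longlonglongrightarrow> integral {a..b} (\<lambda>x. (deriv F x)\<^sup>2)"
proof -
  have "\<bar>(diff_quot F n x)\<^sup>2\<bar> \<le> 1" for n x
    using diff_quot_bounds[of n x] by (simp add: power_le_one)
  moreover have "(\<lambda>x. (diff_quot F n x)\<^sup>2) integrable_on {a..b}" for n
    by (intro integrable_continuous_interval continuous_intros continuous_on_diff_quot)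
  moreover have "(\<lambda>n. (diff_quot F n x)\<^sup>2) \<longlonglongrightarrow> (deriv F x)\<^sup>2"
    if "x \<in> {a..b} - {x. \<not> F differentiable (at x)}" for x
    using that diff_quot_tendsto_deriv by (simp add: tendsto_power)
  ultimately show "(\<lambda>x. (deriv F x)\<^sup>2) integrable_on {a..b}"
    "(\<lambda>n. integral {a..b} (\<lambda>x. (diff_quot F n x)\<^sup>2)) \<longlonglongrightarrow> integral {a..b} (\<lambda>x. (deriv F x)\<^sup>2)"
    using dominated_convergence_ae[OF negligible_not_differentiable,
        of "\<lambda>n x. (diff_quot F n x)\<^sup>2" "{a..b}" "\<lambda>_. 1" "\<lambda>x. (deriv F x)\<^sup>2"]
    by auto
qed

end

lemma integral_power2_ge:
  fixes f :: "real \<Rightarrow> real"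
  assumes f: "(f has_integral m) {a..b}" and f2: "(\<lambda>x. (f x)\<^sup>2) integrable_on {a..b}" and "a < b"
  shows "m\<^sup>2 / (b - a) \<le> integral {a..b} (\<lambda>x. (f x)\<^sup>2)"
proof -
  define c where "c = m / (b - a)"
  define I where "I = integral {a..b} (\<lambda>x. (f x)\<^sup>2)"
  have "((\<lambda>x. c\<^sup>2) has_integral (b - a) * c\<^sup>2) {a..b}"
    using has_integral_const_real[of "c\<^sup>2" a b] \<open>a < b\<close> by simp
  then have H: "((\<lambda>x. (f x)\<^sup>2 - 2 * c * f x + c\<^sup>2) has_integral I - 2 * c * m + (b - a) * c\<^sup>2) {a..b}"
    unfolding I_def by (intro has_integral_add has_integral_diff has_integral_mult_right f
        integrable_integral[OF f2])
  have "(f x)\<^sup>2 - 2 * c * f x + c\<^sup>2 = (f x - c)\<^sup>2" for x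
    by (simp add: power2_eq_square algebra_simps)
  then have "0 \<le> I - 2 * c * m + (b - a) * c\<^sup>2"
    by (intro has_integral_nonneg[OF H]) simp
  moreover have "2 * c * m - (b - a) * c\<^sup>2 = m\<^sup>2 / (b - a)"
  proof -
    have "c * (b - a) = m" using \<open>a < b\<close> by (simp add: c_def)
    then have "2 * c * m - (b - a) * c\<^sup>2 = c * m" by (simp add: power2_eq_square algebra_simps)
    then show ?thesis by (simp add: c_def power2_eq_square)
  qed
  ultimately show ?thesis unfolding I_def by linarith
qed

section \<open>The extremal profile \<open>h_mu\<close>\<close>

lemma v0_v1_bounds:
  assumes "0 \<le> \<mu>" "\<mu> \<le> 2"
  shows "0 \<le> v0_mu \<mu>" "v0_mu \<mu> \<le> v1_mu \<mu>" "v1_mu \<mu> \<le> 1" "v0_mu \<mu> < 1" "0 < v1_mu \<mu>"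
  using assms mult_mono[of \<mu> 2 \<mu> 2] unfolding v0_mu_def v1_mu_def by (auto simp: field_simps)

lemma h_mu_branches_agree:
  assumes "0 \<le> \<mu>" "\<mu> \<le> 2"
  shows "v0_mu \<mu> - \<mu> / 2 * (1 - v0_mu \<mu>) = 0" "v1_mu \<mu> - \<mu> / 2 * (1 - v1_mu \<mu>) = 2 - 1 / v1_mu \<mu>"
    "v0_mu \<mu> / (1 - v0_mu \<mu>) = v0_mu \<mu> + \<mu> / 2 * v0_mu \<mu>" "v1_mu \<mu> + \<mu> / 2 * v1_mu \<mu> = 1"
proof -
  define p where "p = 2 + \<mu>"
  have p: "0 < p" "\<mu> = p - 2" using assms by (simp_all add: p_def)
  have v: "v0_mu \<mu> = (p - 2) / p" "v1_mu \<mu> = 2 / p"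
    by (simp_all add: v0_mu_def v1_mu_def p_def)
  show "v0_mu \<mu> - \<mu> / 2 * (1 - v0_mu \<mu>) = 0" "v1_mu \<mu> - \<mu> / 2 * (1 - v1_mu \<mu>) = 2 - 1 / v1_mu \<mu>"
    "v0_mu \<mu> / (1 - v0_mu \<mu>) = v0_mu \<mu> + \<mu> / 2 * v0_mu \<mu>" "v1_mu \<mu> + \<mu> / 2 * v1_mu \<mu> = 1"
    using p(1) unfolding v by (simp_all add: p(2) field_simps)
qed

lemma continuous_on_h1_mu:
  assumes \<mu>: "0 \<le> \<mu>" "\<mu> \<le> 2"
  shows "continuous_on {0..1} (h1_mu \<mu>)"
proof -
  note v = v0_v1_bounds[OF \<mu>] h_mu_branches_agree[OF \<mu>]
  have eq: "h1_mu \<mu> = (\<lambda>v. if v \<le> v0_mu \<mu> then 0 else if v \<le> v1_mu \<mu> then v - \<mu>/2 * (1 - v) else 2 - 1/v)"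
    by (simp add: fun_eq_iff h1_mu_def)
  have "continuous_on {0..1} (\<lambda>v. if v \<le> v0_mu \<mu> then 0 else if v \<le> v1_mu \<mu> then v - \<mu>/2 * (1 - v) else 2 - 1/v)"
    using v by (intro continuous_on_cases_le continuous_intros) auto
  then show ?thesis unfolding eq .
qed

lemma continuous_on_h2_mu:
  assumes \<mu>: "0 \<le> \<mu>" "\<mu> \<le> 2"
  shows "continuous_on {0..1} (h2_mu \<mu>)"
proof -
  note v = v0_v1_bounds[OF \<mu>] h_mu_branches_agree[OF \<mu>]
  have eq: "h2_mu \<mu> = (\<lambda>v. if v \<le> v0_mu \<mu> then v / (1 - v) else if v \<le> v1_mu \<mu> then v + \<mu>/2 * v else 1)"
    by (simp add: fun_eq_iff h2_mu_def)
  have "continuous_on {0..1} (\<lambda>v. if v \<le> v0_mu \<mu> then v / (1 - v) else if v \<le> v1_mu \<mu> then v + \<mu>/2 * v else 1)"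
    using v by (intro continuous_on_cases_le continuous_intros) auto
  then show ?thesis unfolding eq .
qed

text \<open>The three branches of \<open>h1_mu\<close>, \<open>h2_mu\<close> describe the minimiser \<open>b = v * h1_mu \<mu> v\<close> of the convex
  quadratic \<open>a \<mapsto> \<mu> a + a\<^sup>2 / v + (v - a)\<^sup>2 / (1 - v)\<close> on the interval \<open>max 0 (2 v - 1) \<le> a \<le> v\<close> of
  possible values of \<open>C(v, v)\<close>: the left endpoint \<open>0\<close>, the critical point, and the left endpoint
  \<open>2 v - 1\<close>; moreover \<open>v - b = (1 - v) * h2_mu \<mu> v\<close>.\<close>

lemma h_mu_minimal:
  fixes \<mu> v a :: real
  assumes \<mu>: "0 \<le> \<mu>" "\<mu> \<le> 2" and v: "0 < v" "v < 1"
    and a: "0 \<le> a" "a \<le> v" "v - a \<le> 1 - v"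
  shows "\<mu> * (v * h1_mu \<mu> v) + v * (h1_mu \<mu> v)\<^sup>2 + (1 - v) * (h2_mu \<mu> v)\<^sup>2
    \<le> \<mu> * a + a\<^sup>2 / v + (v - a)\<^sup>2 / (1 - v)"
proof -
  define b where "b = v * h1_mu \<mu> v"
  define K where "K = \<mu> + 2 * b / v - 2 * (v - b) / (1 - v)"
  have key: "v - b = (1 - v) * h2_mu \<mu> v \<and> 0 \<le> (a - b) * K"
  proof (cases "v \<le> v0_mu \<mu>")
    case True
    then have "b = 0" "h2_mu \<mu> v = v / (1 - v)" by (simp_all add: b_def h1_mu_def h2_mu_def)
    moreover have "2 * v / (1 - v) \<le> \<mu>"
      using True \<mu> v by (simp add: v0_mu_def field_simps)
    ultimately show ?thesis using a v by (simp add: K_def)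
  next
    case False
    show ?thesis
    proof (cases "v \<le> v1_mu \<mu>")
      case True
      with False have b: "b = v * (v - \<mu> / 2 * (1 - v))" and h2: "h2_mu \<mu> v = v + \<mu> / 2 * v"
        by (simp_all add: b_def h1_mu_def h2_mu_def)
      then have vb: "v - b = (1 - v) * h2_mu \<mu> v" by (simp add: algebra_simps)
      have "K = \<mu> + 2 * (v - \<mu> / 2 * (1 - v)) - 2 * h2_mu \<mu> v"
        using v unfolding K_def vb by (simp add: b)
      then have "K = 0" by (simp add: h2 field_simps)
      with vb show ?thesis by simp
    next
      case True': False
      with False have b: "b = 2 * v - 1" and h2: "h2_mu \<mu> v = 1"
        using v by (simp_all add: b_def h1_mu_def h2_mu_def field_simps)
      have "2 / v < 2 + \<mu>"
        using True' \<mu> v by (simp add: v1_mu_def field_simps)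
      moreover have "2 * b / v = 4 - 2 / v" using v by (simp add: b field_simps)
      moreover have "2 * (v - b) / (1 - v) = 2" using v by (simp add: b field_simps)
      ultimately have "0 \<le> K" by (simp add: K_def)
      moreover have "0 \<le> a - b" using a by (simp add: b)
      ultimately show ?thesis by (simp add: b h2)
    qed
  qed
  have expand: "(\<mu> * a + a\<^sup>2 * p + (v - a)\<^sup>2 * q) - (\<mu> * b + b\<^sup>2 * p + (v - b)\<^sup>2 * q)
      = (a - b) * (\<mu> + 2 * b * p - 2 * (v - b) * q) + (a - b)\<^sup>2 * (p + q)" for p q
    by (simp add: algebra_simps power2_eq_square)
  have "K = \<mu> + 2 * b * (1 / v) - 2 * (v - b) * (1 / (1 - v))" by (simp add: K_def)
  then have "(\<mu> * a + a\<^sup>2 * (1 / v) + (v - a)\<^sup>2 * (1 / (1 - v)))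
      - (\<mu> * b + b\<^sup>2 * (1 / v) + (v - b)\<^sup>2 * (1 / (1 - v)))
      = (a - b) * K + (a - b)\<^sup>2 * (1 / v + 1 / (1 - v))"
    by (simp only: expand)
  moreover have "0 \<le> (a - b)\<^sup>2 * (1 / v + 1 / (1 - v))" using v by simp
  ultimately have "\<mu> * b + b\<^sup>2 * (1 / v) + (v - b)\<^sup>2 * (1 / (1 - v))
      \<le> \<mu> * a + a\<^sup>2 * (1 / v) + (v - a)\<^sup>2 * (1 / (1 - v))"
    using key by linarith
  moreover have "v * (h1_mu \<mu> v)\<^sup>2 = b\<^sup>2 / v" "(1 - v) * (h2_mu \<mu> v)\<^sup>2 = (v - b)\<^sup>2 / (1 - v)"
    using v key by (simp_all add: b_def power2_eq_square)
  ultimately show ?thesis by (simp add: b_def)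
qed

lemma integral_step_function:
  assumes "v \<in> {0..1}"
  shows "integral {0..1} (\<lambda>t. if t \<le> v then c else d) = v * c + (1 - v) * (d :: real)"
proof -
  let ?f = "\<lambda>t. if t \<le> v then c else d"
  have "?f integrable_on {0..1}"
  proof (rule Henstock_Kurzweil_Integration.integrable_combine[where a = 0 and c = v and b = 1])
    show "?f integrable_on {0..v}"
      by (rule integrable_eq[OF integrable_const_ivl]) simp
    show "?f integrable_on {v..1}"
      by (rule integrable_spike_finite[where S = "{v}" and f = "\<lambda>t. d"]) auto
  qed (use assms in auto)
  then have "integral {0..1} ?f = integral {0..v} ?f + integral {v..1} ?f"
    using assms by (simp add: Henstock_Kurzweil_Integration.integral_combine)
  also have "integral {0..v} ?f = integral {0..v} (\<lambda>t. c)"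
    by (rule integral_cong) simp
  also have "integral {v..1} ?f = integral {v..1} (\<lambda>t. d)"
    by (rule integral_spike[of "{v}"]) auto
  finally show ?thesis using assms by (simp add: algebra_simps)
qed

lemma psi_searrow_eq: "psi_searrow \<mu> = 6 * integral {0..1} (\<lambda>v. v * h1_mu \<mu> v) - 2"
proof -
  have "integral {0..1} (\<lambda>t. (if t \<le> v then 1 else 0) * h_mu \<mu> t v) = v * h1_mu \<mu> v"
    if "v \<in> {0..1}" for v
  proof -
    have "(\<lambda>t. (if t \<le> v then 1 else 0) * h_mu \<mu> t v) = (\<lambda>t. if t \<le> v then h1_mu \<mu> v else 0)"
      by (simp add: h_mu_def fun_eq_iff)
    then show ?thesis using integral_step_function[OF that, of "h1_mu \<mu> v" 0] by simp
  qed
  then have "integral {0..1} (\<lambda>v. integral {0..1} (\<lambda>t. (if t \<le> v then 1 else 0) * h_mu \<mu> t v))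
      = integral {0..1} (\<lambda>v. v * h1_mu \<mu> v)"
    by (rule integral_cong)
  then show ?thesis unfolding psi_searrow_def by simp
qed

lemma xi_searrow_eq:
  "xi_searrow \<mu> = 6 * integral {0..1} (\<lambda>v. v * (h1_mu \<mu> v)\<^sup>2 + (1 - v) * (h2_mu \<mu> v)\<^sup>2) - 2"
proof -
  have "integral {0..1} (\<lambda>t. (h_mu \<mu> t v)\<^sup>2) = v * (h1_mu \<mu> v)\<^sup>2 + (1 - v) * (h2_mu \<mu> v)\<^sup>2"
    if "v \<in> {0..1}" for v
  proof -
    have "(\<lambda>t. (h_mu \<mu> t v)\<^sup>2) = (\<lambda>t. if t \<le> v then (h1_mu \<mu> v)\<^sup>2 else (h2_mu \<mu> v)\<^sup>2)"
      by (simp add: h_mu_def fun_eq_iff)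
    then show ?thesis using integral_step_function[OF that, of "(h1_mu \<mu> v)\<^sup>2" "(h2_mu \<mu> v)\<^sup>2"] by simp
  qed
  then have "integral {0..1} (\<lambda>v. integral {0..1} (\<lambda>t. (h_mu \<mu> t v)\<^sup>2))
      = integral {0..1} (\<lambda>v. v * (h1_mu \<mu> v)\<^sup>2 + (1 - v) * (h2_mu \<mu> v)\<^sup>2)"
    by (rule integral_cong)
  then show ?thesis unfolding xi_searrow_def by simp
qed

section \<open>Sections of copulas\<close>

lemma copula_margins:
  assumes "is_copula C" "0 \<le> u" "u \<le> 1"
  shows "C u 0 = 0" "C 0 u = 0" "C u 1 = u" "C 1 u = u"
  using assms unfolding is_copula_def by auto

lemma copula_2_increasing:
  assumes "is_copula C" "0 \<le> u1" "u1 \<le> u2" "u2 \<le> 1" "0 \<le> v1" "v1 \<le> v2" "v2 \<le> 1"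
  shows "0 \<le> C u2 v2 - C u2 v1 - C u1 v2 + C u1 v1"
  using assms unfolding is_copula_def by blast

lemma copula_increment_left:
  assumes C: "is_copula C" and u: "0 \<le> u1" "u1 \<le> u2" "u2 \<le> 1" and v: "0 \<le> v" "v \<le> 1"
  shows "0 \<le> C u2 v - C u1 v" "C u2 v - C u1 v \<le> u2 - u1"
  using copula_2_increasing[OF C u, of 0 v] copula_2_increasing[OF C u, of v 1] v
    copula_margins[OF C, of u1] copula_margins[OF C, of u2] u
  by simp_all

lemma copula_increment_right:
  assumes C: "is_copula C" and v: "0 \<le> v1" "v1 \<le> v2" "v2 \<le> 1" and u: "0 \<le> u" "u \<le> 1"
  shows "0 \<le> C u v2 - C u v1" "C u v2 - C u v1 \<le> v2 - v1"
  using copula_2_increasing[OF C _ _ _ v, of 0 u] copula_2_increasing[OF C _ _ _ v, of u 1] u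
    copula_margins[OF C, of v1] copula_margins[OF C, of v2] v
  by simp_all

text \<open>\<open>is_copula\<close> constrains \<open>C\<close> only on the unit square; the sections of this extension are
  monotone and 1-Lipschitz on all of \<open>\<real>\<close> and agree with those of \<open>C\<close> inside the square.\<close>

definition copula_ext :: "(real \<Rightarrow> real \<Rightarrow> real) \<Rightarrow> real \<Rightarrow> real \<Rightarrow> real" where
  "copula_ext C u v = C (max 0 (min 1 u)) (max 0 (min 1 v))"

lemma copula_ext_eq: "u \<in> {0..1} \<Longrightarrow> v \<in> {0..1} \<Longrightarrow> copula_ext C u v = C u v"
  by (simp add: copula_ext_def)

lemma mono_nonexpansive_copula_ext:
  assumes "is_copula C"
  shows "mono_nonexpansive (\<lambda>u. copula_ext C u v)"
proof
  fix x y :: real assume "x \<le> y"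
  then have "0 \<le> max 0 (min 1 x)" "max 0 (min 1 x) \<le> max 0 (min 1 y)" "max 0 (min 1 y) \<le> 1"
    "max 0 (min 1 y) - max 0 (min 1 x) \<le> y - x"
    by auto
  then show "copula_ext C x v \<le> copula_ext C y v" "copula_ext C y v - copula_ext C x v \<le> y - x"
    using copula_increment_left[OF assms, of "max 0 (min 1 x)" "max 0 (min 1 y)" "max 0 (min 1 v)"]
    by (auto simp: copula_ext_def)
qed

lemma copula_ext_lipschitz_right:
  assumes "is_copula C"
  shows "\<bar>copula_ext C u v - copula_ext C u w\<bar> \<le> \<bar>v - w\<bar>"
proof -
  have *: "\<bar>C (max 0 (min 1 u)) (max 0 (min 1 v)) - C (max 0 (min 1 u)) (max 0 (min 1 w))\<bar> \<le> \<bar>v - w\<bar>"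
    if "v \<le> w" for v w
  proof -
    have "0 \<le> max 0 (min 1 v)" "max 0 (min 1 v) \<le> max 0 (min 1 w)" "max 0 (min 1 w) \<le> 1"
      "max 0 (min 1 w) - max 0 (min 1 v) \<le> w - v"
      using that by auto
    then show ?thesis
      using that copula_increment_right[OF assms, of "max 0 (min 1 v)" "max 0 (min 1 w)" "max 0 (min 1 u)"]
      by auto
  qed
  show ?thesis
    using *[of v w] *[of w v] by (cases "v \<le> w") (auto simp: copula_ext_def abs_minus_commute)
qed

lemma integral_square_deriv_copula_ext:
  assumes "v \<in> {0..1}"
  shows "integral {0..1} (\<lambda>u. (deriv (\<lambda>t. C t v) u)\<^sup>2)
    = integral {0..1} (\<lambda>u. (deriv (\<lambda>t. copula_ext C t v) u)\<^sup>2)"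
proof (rule integral_spike[of "{0, 1}"])
  fix u :: real assume "u \<in> {0..1} - {0, 1}"
  then have "\<forall>\<^sub>F t in nhds u. t \<in> {0<..<1}"
    by (intro eventually_nhds_in_open) auto
  then have "\<forall>\<^sub>F t in nhds u. copula_ext C t v = C t v"
    by eventually_elim (use assms in \<open>simp add: copula_ext_eq\<close>)
  then show "(deriv (\<lambda>t. copula_ext C t v) u)\<^sup>2 = (deriv (\<lambda>t. C t v) u)\<^sup>2"
    by (simp add: deriv_cong_ev)
qed simp

lemma copula_section_energy_ge:
  assumes C: "is_copula C" and \<mu>: "0 \<le> \<mu>" "\<mu> \<le> 2" and v: "0 < v" "v < 1"
  shows "\<mu> * (v * h1_mu \<mu> v) + v * (h1_mu \<mu> v)\<^sup>2 + (1 - v) * (h2_mu \<mu> v)\<^sup>2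
    \<le> \<mu> * C v v + integral {0..1} (\<lambda>u. (deriv (\<lambda>t. C t v) u)\<^sup>2)"
proof -
  interpret F: mono_nonexpansive "\<lambda>u. copula_ext C u v"
    by (rule mono_nonexpansive_copula_ext[OF C])
  define D where "D = deriv (\<lambda>u. copula_ext C u v)"
  have ext: "copula_ext C 0 v = 0" "copula_ext C v v = C v v" "copula_ext C 1 v = v"
    using v copula_margins[OF C, of v] by (simp_all add: copula_ext_eq)
  have "(D has_integral C v v) {0..v}" "(D has_integral v - C v v) {v..1}"
    using F.has_integral_deriv[of 0 v] F.has_integral_deriv[of v 1] v
    by (simp_all add: D_def ext)
  moreover have sq: "(\<lambda>u. (D u)\<^sup>2) integrable_on {a..b}" for a b
    unfolding D_def by (rule F.square_deriv_integrable)
  ultimately have "(C v v)\<^sup>2 / v \<le> integral {0..v} (\<lambda>u. (D u)\<^sup>2)"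
    "(v - C v v)\<^sup>2 / (1 - v) \<le> integral {v..1} (\<lambda>u. (D u)\<^sup>2)"
    using integral_power2_ge[of D "C v v" 0 v] integral_power2_ge[of D "v - C v v" v 1] v by simp_all
  moreover have "integral {0..v} (\<lambda>u. (D u)\<^sup>2) + integral {v..1} (\<lambda>u. (D u)\<^sup>2)
      = integral {0..1} (\<lambda>u. (D u)\<^sup>2)"
    using v sq by (intro Henstock_Kurzweil_Integration.integral_combine) auto
  moreover have "0 \<le> C v v" "C v v \<le> v" "v - C v v \<le> 1 - v"
    using copula_increment_left[OF C, of 0 v v] copula_increment_right[OF C, of v 1 v]
      copula_increment_left[OF C, of v 1 v] copula_margins[OF C, of v] v
    by simp_all
  then have "\<mu> * (v * h1_mu \<mu> v) + v * (h1_mu \<mu> v)\<^sup>2 + (1 - v) * (h2_mu \<mu> v)\<^sup>2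
      \<le> \<mu> * C v v + (C v v)\<^sup>2 / v + (v - C v v)\<^sup>2 / (1 - v)"
    by (rule h_mu_minimal[OF \<mu> v])
  ultimately show ?thesis
    using integral_square_deriv_copula_ext[of v C] v by (simp add: D_def)
qed

lemma diff_quot_copula_ext_lipschitz:
  assumes "is_copula C"
  shows "\<bar>diff_quot (\<lambda>t. copula_ext C t v) n u - diff_quot (\<lambda>t. copula_ext C t w) n u\<bar>
    \<le> 2 * real (Suc n) * \<bar>v - w\<bar>"
proof -
  define d where "d = 1 / real (Suc n)"
  let ?X = "(copula_ext C (u + d) v - copula_ext C (u + d) w) - (copula_ext C u v - copula_ext C u w)"
  have "diff_quot (\<lambda>t. copula_ext C t v) n u - diff_quot (\<lambda>t. copula_ext C t w) n u
      = real (Suc n) * ?X"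
    by (simp add: diff_quot_def d_def algebra_simps)
  then have "\<bar>diff_quot (\<lambda>t. copula_ext C t v) n u - diff_quot (\<lambda>t. copula_ext C t w) n u\<bar>
      = real (Suc n) * \<bar>?X\<bar>"
    by (simp only: abs_mult abs_of_nat)
  also have "\<dots> \<le> real (Suc n) * (2 * \<bar>v - w\<bar>)"
    using order_trans[OF abs_triangle_ineq4 add_mono[OF copula_ext_lipschitz_right[OF assms, of "u + d" v w]
        copula_ext_lipschitz_right[OF assms, of u v w]]]
    by (intro mult_left_mono) simp_all
  finally show ?thesis by (simp add: algebra_simps)
qed

lemma continuous_on_integral_square_diff_quot_copula:
  assumes C: "is_copula C"
  shows "continuous_on {0..1} (\<lambda>v. integral {0..1} (\<lambda>u. (diff_quot (\<lambda>t. copula_ext C t v) n u)\<^sup>2))"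
proof (rule lipschitz_on_continuous_on[OF lipschitz_onI])
  fix v w :: real
  let ?q = "\<lambda>v u. diff_quot (\<lambda>t. copula_ext C t v) n u"
  interpret v: mono_nonexpansive "\<lambda>u. copula_ext C u v" by (rule mono_nonexpansive_copula_ext[OF C])
  interpret w: mono_nonexpansive "\<lambda>u. copula_ext C u w" by (rule mono_nonexpansive_copula_ext[OF C])
  have int: "(\<lambda>u. (?q x u)\<^sup>2) integrable_on {0..1}" for x
  proof -
    interpret x: mono_nonexpansive "\<lambda>u. copula_ext C u x" by (rule mono_nonexpansive_copula_ext[OF C])
    show ?thesis by (intro integrable_continuous_interval continuous_intros x.continuous_on_diff_quot)
  qed
  have "\<bar>(?q v u)\<^sup>2 - (?q w u)\<^sup>2\<bar> \<le> 4 * real (Suc n) * \<bar>v - w\<bar>" for u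
  proof -
    have "\<bar>(?q v u)\<^sup>2 - (?q w u)\<^sup>2\<bar> = \<bar>?q v u - ?q w u\<bar> * \<bar>?q v u + ?q w u\<bar>"
      by (simp add: power2_eq_square abs_mult[symmetric] algebra_simps)
    also have "\<dots> \<le> (2 * real (Suc n) * \<bar>v - w\<bar>) * 2"
      using diff_quot_copula_ext_lipschitz[OF C, of v n u w] v.diff_quot_bounds[of n u]
        w.diff_quot_bounds[of n u]
      by (intro mult_mono) auto
    finally show ?thesis by (simp add: algebra_simps)
  qed
  moreover have "(\<lambda>u. (?q v u)\<^sup>2 - (?q w u)\<^sup>2) integrable_on {0..1}"
    using int[of v] int[of w] by (rule integrable_diff)
  moreover have "(\<lambda>u. 4 * real (Suc n) * \<bar>v - w\<bar>) integrable_on {0..1::real}"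
    by (rule integrable_const_ivl)
  ultimately have "norm (integral {0..1} (\<lambda>u. (?q v u)\<^sup>2 - (?q w u)\<^sup>2))
      \<le> integral {0..1} (\<lambda>u::real. 4 * real (Suc n) * \<bar>v - w\<bar>)"
    by (intro integral_norm_bound_integral) auto
  then show "dist (integral {0..1} (\<lambda>u. (?q v u)\<^sup>2)) (integral {0..1} (\<lambda>u. (?q w u)\<^sup>2))
      \<le> 4 * real (Suc n) * dist v w"
    using int by (simp add: dist_real_def integral_diff)
qed simp

lemma integrable_square_deriv_copula:
  assumes C: "is_copula C"
  shows "(\<lambda>v. integral {0..1} (\<lambda>u. (deriv (\<lambda>t. C t v) u)\<^sup>2)) integrable_on {0..1}"
proof -
  let ?J = "\<lambda>n v. integral {0..1} (\<lambda>u. (diff_quot (\<lambda>t. copula_ext C t v) n u)\<^sup>2)"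
  let ?K = "\<lambda>v. integral {0..1} (\<lambda>u. (deriv (\<lambda>t. copula_ext C t v) u)\<^sup>2)"
  have bound: "norm (?J n v) \<le> 1" and conv: "(\<lambda>n. ?J n v) \<longlonglongrightarrow> ?K v" for n v
  proof -
    interpret v: mono_nonexpansive "\<lambda>u. copula_ext C u v" by (rule mono_nonexpansive_copula_ext[OF C])
    have "(diff_quot (\<lambda>t. copula_ext C t v) n u)\<^sup>2 \<le> 1" for u
      using v.diff_quot_bounds[of n u] by (simp add: power_le_one)
    moreover have "(\<lambda>u. (diff_quot (\<lambda>t. copula_ext C t v) n u)\<^sup>2) integrable_on {0..1}"
      by (intro integrable_continuous_interval continuous_intros v.continuous_on_diff_quot)
    moreover have "(\<lambda>_. 1::real) integrable_on {0..1::real}"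
      by (rule integrable_const_ivl)
    ultimately have "norm (?J n v) \<le> integral {0..1} (\<lambda>u::real. 1::real)"
      by (intro integral_norm_bound_integral) simp_all
    then show "norm (?J n v) \<le> 1" by simp
    show "(\<lambda>n. ?J n v) \<longlonglongrightarrow> ?K v" by (rule v.square_deriv_integrable(2))
  qed
  have "?K integrable_on {0..1}"
  proof (rule dominated_convergence(1)[of ?J "{0..1}" "\<lambda>_. 1" ?K])
    show "?J n integrable_on {0..1}" for n
      by (rule integrable_continuous_interval[OF continuous_on_integral_square_diff_quot_copula[OF C]])
    show "(\<lambda>_. 1::real) integrable_on {0..1::real}"
      by (rule integrable_const_ivl)
    show "norm (?J n v) \<le> 1" for n v by (rule bound)
    show "(\<lambda>n. ?J n v) \<longlonglongrightarrow> ?K v" for v by (rule conv)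
  qed
  then show ?thesis
    by (rule integrable_eq) (simp add: integral_square_deriv_copula_ext[of _ C])
qed

lemma integrable_copula_diagonal:
  assumes C: "is_copula C"
  shows "(\<lambda>v. C v v) integrable_on {0..1}"
proof -
  have "2-lipschitz_on UNIV (\<lambda>x. copula_ext C x x)"
  proof (rule lipschitz_onI)
    fix x y :: real
    interpret x: mono_nonexpansive "\<lambda>u. copula_ext C u x" by (rule mono_nonexpansive_copula_ext[OF C])
    show "dist (copula_ext C x x) (copula_ext C y y) \<le> 2 * dist x y"
      using lipschitz_onD[OF x.lipschitz, of x y] copula_ext_lipschitz_right[OF C, of y x y]
        dist_triangle[of "copula_ext C x x" "copula_ext C y y" "copula_ext C y x"]
      by (simp add: dist_real_def)
  qed simp
  then have "(\<lambda>x. copula_ext C x x) integrable_on {0..1}"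
    by (intro integrable_continuous_interval lipschitz_on_continuous_on[THEN continuous_on_subset]) auto
  then show ?thesis by (rule integrable_eq) (simp add: copula_ext_eq)
qed

theorem mainTheorem6:
  fixes \<mu> :: real and C :: "real \<Rightarrow> real \<Rightarrow> real"
  assumes "0 \<le> \<mu>" and "\<mu> \<le> 2" and "is_copula C"
  shows "\<mu> * psi_cop C + xi_cop C \<ge> \<mu> * psi_searrow \<mu> + xi_searrow \<mu>"
proof -
  note \<mu> = assms(1,2) and C = assms(3)
  let ?I = "\<lambda>v. integral {0..1} (\<lambda>u. (deriv (\<lambda>t. C t v) u)\<^sup>2)"
  let ?P = "\<lambda>v. v * h1_mu \<mu> v"
  let ?X = "\<lambda>v. v * (h1_mu \<mu> v)\<^sup>2 + (1 - v) * (h2_mu \<mu> v)\<^sup>2"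
  note h1 = continuous_on_h1_mu[OF \<mu>] and h2 = continuous_on_h2_mu[OF \<mu>]
  have int_P: "?P integrable_on {0..1}"
    by (intro integrable_continuous_interval continuous_intros h1)
  have int_X: "?X integrable_on {0..1}"
    by (intro integrable_continuous_interval continuous_intros h1 h2)
  have int_C: "(\<lambda>v. C v v) integrable_on {0..1}" and int_I: "?I integrable_on {0..1}"
    using integrable_copula_diagonal[OF C] integrable_square_deriv_copula[OF C] .
  have "(\<lambda>v. \<mu> * ?P v + ?X v) integrable_on {0<..<1}" "(\<lambda>v. \<mu> * C v v + ?I v) integrable_on {0<..<1}"
    unfolding integrable_on_open_interval_real
    by (intro Henstock_Kurzweil_Integration.integrable_add integrable_on_mult_right int_P int_X int_C int_I)+
  then have "integral {0<..<1} (\<lambda>v. \<mu> * ?P v + ?X v) \<le> integral {0<..<1} (\<lambda>v. \<mu> * C v v + ?I v)"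
    using copula_section_energy_ge[OF C \<mu>] by (intro integral_le) (auto simp: add.assoc)
  then have "\<mu> * integral {0..1} ?P + integral {0..1} ?X \<le> \<mu> * integral {0..1} (\<lambda>v. C v v) + integral {0..1} ?I"
    using int_P int_X int_C int_I
    by (simp add: integral_open_interval_real[symmetric] Henstock_Kurzweil_Integration.integral_add integrable_on_mult_right)
  then show ?thesis
    unfolding psi_cop_def xi_cop_def psi_searrow_eq xi_searrow_eq by (simp add: algebra_simps)
qed

end
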